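(* For every $n\in\mathbb N$, $s>0$ and $\varepsilon\le n^{-1}$, given knowledge of $n$, there is a probabilistic online $s$-bounded monotone partition of update sequences of up to $n$ points on the real line that is $(O(1),\varepsilon,O(n\varepsilon))$-smooth at every time $t$. Moreover, if no pair of points in $V_t$ has distance in $[\varepsilon s,s]$, the partition is $0$-smooth at all times.
   Context: The real line carries the metric $d(u,v)=|u-v|$. An update sequence on it is a sequence $(v_t,o_t)\in\mathbb R\times\{+,-\}$ ($v_t$ arrives if $o_t=+$, leaves if $o_t=-$), with alive sets $L_0=\varnothing$, $L_t=L_{t-1}\cup\{v_t\}$ or $L_{t-1}\setminus\{v_t\}$, and $V_t=\{v_j:j\le t,o_j=+\}$. A partition $P$ of a set $V$ is a family of disjoint nonempty clusters with union $V$; $P(v)$ is the cluster of $v$; $s$-bounded means every cluster has diameter at most $s$. An online monotone partition outputs for each $t$ a partition $P_t$ of $L_t$ depending only on $\sigma_1,\dots,\sigma_t$, such that for $u,w\in L_t\cap L_{t+1}$, $P_t(u)=P_t(w)$ implies $P_{t+1}(u)=P_{t+1}(w)$; a probabilistic online $s$-bounded monotone partition is a distribution over online monotone partitions all of whose partitions are $s$-bounded. A probabilistic $s$-bounded partition $P$ is $(\delta,\varepsilon,\gamma)$-smooth if for all $u,v$: $d(u,v)\le s$ implies $\Pr[P(u)\ne P(v)]\le\delta d(u,v)/s$, and $d(u,v)\le\varepsilon s$ implies $\Pr[P(u)\ne P(v)]\le\delta\gamma d(u,v)/s$; $0$-smooth means $\Pr[P(u)\ne P(v)]=0$ whenever $d(u,v)\le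 s$. *)

theory Defs
  imports "HOL-Probability.Probability" "HOL-Library.Disjoint_Sets"
begin

text \<open>An update is a pair (v, o); o = True means arrival (+), o = False means departure (-).
  A finite update sequence sigma_1..sigma_t is a list; the time-t prefix is the list itself.\<close>

type_synonym update = "real \<times> bool"

definition alive :: "update list \<Rightarrow> real set" where
  "alive xs = fold (\<lambda>(v, arr) L. if arr then insert v L else L - {v}) xs {}"

definition arrived :: "update list \<Rightarrow> real set" where
  "arrived xs = {v. (v, True) \<in> set xs}"

definition cluster :: "real set set \<Rightarrow> real \<Rightarrow> real set" where
  "cluster P v = (THE C. C \<in> P \<and> v \<in> C)"

definition s_bounded :: "real \<Rightarrow> real set set \<Rightarrow> bool" where
  "s_bounded s P \<longleftrightarrow> (\<forall>C\<in>P. diameter C \<le> s)"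

text \<open>An online s-bounded monotone partition for update sequences of up to n points:
  A maps each prefix sigma_1..sigma_t (so it depends only on these) to the partition P_t.\<close>
definition online_mono_partition :: "nat \<Rightarrow> real \<Rightarrow> (update list \<Rightarrow> real set set) \<Rightarrow> bool" where
  "online_mono_partition n s A \<longleftrightarrow>
     (\<forall>xs. card (arrived xs) \<le> n \<longrightarrow> partition_on (alive xs) (A xs) \<and> s_bounded s (A xs)) \<and>
     (\<forall>xs x. card (arrived (xs @ [x])) \<le> n \<longrightarrow>
        (\<forall>u\<in>alive xs \<inter> alive (xs @ [x]). \<forall>w\<in>alive xs \<inter> alive (xs @ [x]).
           cluster (A xs) u = cluster (A xs) w \<longrightarrow>
           cluster (A (xs @ [x])) u = cluster (A (xs @ [x])) w))"

definition sep_event ::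
  "(update list \<Rightarrow> real set set) measure \<Rightarrow> update list \<Rightarrow> real \<Rightarrow> real \<Rightarrow> (update list \<Rightarrow> real set set) set" where
  "sep_event M xs u v = {A \<in> space M. cluster (A xs) u \<noteq> cluster (A xs) v}"

text \<open>A probabilistic online s-bounded monotone partition: a probability distribution M over
  online s-bounded monotone partitions (all of them, not just almost all), with measurable
  separation events.\<close>
definition prob_online_partition ::
  "nat \<Rightarrow> real \<Rightarrow> (update list \<Rightarrow> real set set) measure \<Rightarrow> bool" where
  "prob_online_partition n s M \<longleftrightarrow>
     prob_space M \<and> (\<forall>A\<in>space M. online_mono_partition n s A) \<and>
     (\<forall>xs u v. card (arrived xs) \<le> n \<longrightarrow> u \<in> alive xs \<longrightarrow> v \<in> alive xs \<longrightarrow>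
        sep_event M xs u v \<in> sets M)"

definition smooth_at ::
  "(update list \<Rightarrow> real set set) measure \<Rightarrow> real \<Rightarrow> real \<Rightarrow> real \<Rightarrow> real \<Rightarrow> update list \<Rightarrow> bool" where
  "smooth_at M s \<delta> \<epsilon> \<gamma> xs \<longleftrightarrow>
     (\<forall>u\<in>alive xs. \<forall>v\<in>alive xs.
        (\<bar>u - v\<bar> \<le> s \<longrightarrow> measure M (sep_event M xs u v) \<le> \<delta> * \<bar>u - v\<bar> / s) \<and>
        (\<bar>u - v\<bar> \<le> \<epsilon> * s \<longrightarrow> measure M (sep_event M xs u v) \<le> \<delta> * \<gamma> * \<bar>u - v\<bar> / s))"

definition zero_smooth_at ::
  "(update list \<Rightarrow> real set set) measure \<Rightarrow> real \<Rightarrow> update list \<Rightarrow> bool" where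
  "zero_smooth_at M s xs \<longleftrightarrow>
     (\<forall>u\<in>alive xs. \<forall>v\<in>alive xs. \<bar>u - v\<bar> \<le> s \<longrightarrow> measure M (sep_event M xs u v) = 0)"

end

(*
  Cut the line into cells of width about 5s/11 whose boundaries are jittered independently by up
  to s/11. When a point arrives within 2 eps s of an earlier point in a neighbouring cell, the two
  cells are merged, unless a neighbouring boundary of theirs is merged already. Merges are never
  undone, so the partition is monotone, and two merged cells still have diameter below s.

  Points at distance d are separated only if a boundary falls between them; each of the at most
  four candidate boundaries does so with probability O(d/s). If d <= eps s, the merge across that
  boundary must moreover have been blocked, so one of the at most n points lies within 2 eps s of a
  neighbouring boundary. Neighbouring boundaries are independent, which gives O(n eps d/s). If no
  distance lies in [eps s, s], points within distance s form groups of diameter below eps s, and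
  no merge inside such a group is ever blocked. For n <= 2, where eps may exceed 1/3, the whole
  set is one cluster whenever its diameter is at most s, and otherwise every point is a singleton.
*)

theory Submission
  imports Defs
begin

lemma alive_Nil [simp]: "alive [] = {}"
  by (simp add: alive_def)

lemma arrived_Nil [simp]: "arrived [] = {}"
  by (simp add: arrived_def)

lemma alive_snoc: "alive (xs @ [(p, b)]) = (if b then insert p (alive xs) else alive xs - {p})"
  by (simp add: alive_def)

lemma arrived_snoc: "arrived (xs @ [(p, b)]) = (if b then insert p (arrived xs) else arrived xs)"
  by (auto simp: arrived_def)

lemma arrived_subset_append: "arrived xs \<subseteq> arrived (xs @ ys)"
  by (auto simp: arrived_def)

lemma arrived_subset_fst: "arrived xs \<subseteq> fst ` set xs"
  by (force simp: arrived_def)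

lemma finite_arrived: "finite (arrived xs)"
  using arrived_subset_fst finite_subset by blast

lemma alive_subset_arrived: "alive xs \<subseteq> arrived xs"
proof (induction xs rule: rev_induct)
  case (snoc x xs)
  then show ?case by (cases x) (auto simp: alive_snoc arrived_snoc)
qed simp

lemma finite_alive: "finite (alive xs)"
  using alive_subset_arrived finite_arrived finite_subset by blast

definition level_partition :: "'a set \<Rightarrow> ('a \<Rightarrow> 'b) \<Rightarrow> 'a set set" where
  "level_partition S g = (\<lambda>x. {y \<in> S. g y = g x}) ` S"

lemma partition_on_level_partition: "partition_on S (level_partition S g)"
  unfolding level_partition_def by (rule partition_onI) (auto simp: disjnt_def)

lemma cluster_level_partition:
  "x \<in> S \<Longrightarrow> cluster (level_partition S g) x = {y \<in> S. g y = g x}"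
  unfolding cluster_def level_partition_def by (rule the_equality) auto

lemma cluster_level_partition_eq_iff:
  assumes "x \<in> S" "y \<in> S"
  shows "cluster (level_partition S g) x = cluster (level_partition S g) y \<longleftrightarrow> g x = g y"
proof -
  have "g x = g y" if "{z \<in> S. g z = g x} = {z \<in> S. g z = g y}"
  proof -
    have "x \<in> {z \<in> S. g z = g x}" using assms(1) by simp
    then show ?thesis unfolding that by simp
  qed
  then show ?thesis using assms by (auto simp: cluster_level_partition)
qed

lemma online_mono_partition_level_partitionI:
  assumes "s \<ge> 0"
    and bounded: "\<And>xs y z. card (arrived xs) \<le> n \<Longrightarrow> y \<in> alive xs \<Longrightarrow> z \<in> alive xs \<Longrightarrow>
      lab xs y = lab xs z \<Longrightarrow> \<bar>y - z\<bar> \<le> s"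
    and mono: "\<And>xs x u w. card (arrived (xs @ [x])) \<le> n \<Longrightarrow>
      u \<in> alive xs \<inter> alive (xs @ [x]) \<Longrightarrow> w \<in> alive xs \<inter> alive (xs @ [x]) \<Longrightarrow>
      lab xs u = lab xs w \<Longrightarrow> lab (xs @ [x]) u = lab (xs @ [x]) w"
  shows "online_mono_partition n s (\<lambda>xs. level_partition (alive xs) (lab xs))"
  unfolding online_mono_partition_def
proof (intro conjI allI impI ballI)
  fix xs :: "update list"
  assume n: "card (arrived xs) \<le> n"
  show "partition_on (alive xs) (level_partition (alive xs) (lab xs))"
    by (rule partition_on_level_partition)
  show "s_bounded s (level_partition (alive xs) (lab xs))"
    unfolding s_bounded_def level_partition_def
    using assms(1) bounded[OF n] by (auto intro!: diameter_le)
next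
  fix xs x u w
  assume n: "card (arrived (xs @ [x])) \<le> n" and u: "u \<in> alive xs \<inter> alive (xs @ [x])"
    and w: "w \<in> alive xs \<inter> alive (xs @ [x])"
    and eq: "cluster (level_partition (alive xs) (lab xs)) u = cluster (level_partition (alive xs) (lab xs)) w"
  have "lab xs u = lab xs w"
    using eq u w by (simp add: cluster_level_partition_eq_iff)
  then have "lab (xs @ [x]) u = lab (xs @ [x]) w"
    using mono[OF n u w] by blast
  then show "cluster (level_partition (alive (xs @ [x])) (lab (xs @ [x]))) u =
      cluster (level_partition (alive (xs @ [x])) (lab (xs @ [x]))) w"
    using u w by (simp add: cluster_level_partition_eq_iff)
qed

section \<open>Laws of random online partitions\<close>

definition partition_sigma :: "(update list \<Rightarrow> real set set) set \<Rightarrow> (update list \<Rightarrow> real set set) measure" where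
  "partition_sigma G = measure_of G {{A \<in> G. cluster (A xs) u \<noteq> cluster (A xs) v} | xs u v. True} (\<lambda>_. 0)"

definition partition_law ::
  "'w measure \<Rightarrow> ('w \<Rightarrow> update list \<Rightarrow> real set set) \<Rightarrow> (update list \<Rightarrow> real set set) measure" where
  "partition_law \<Omega> alg = distr \<Omega> (partition_sigma (alg ` space \<Omega>)) alg"

lemma separation_events_subset_Pow:
  "{{A \<in> G. cluster (A xs) u \<noteq> cluster (A xs) v} | xs u v. True} \<subseteq> Pow G"
  by auto

context
  fixes \<Omega> :: "'w measure" and alg :: "'w \<Rightarrow> update list \<Rightarrow> real set set"
  assumes separation_sets:
    "\<And>xs u v. {\<omega> \<in> space \<Omega>. cluster (alg \<omega> xs) u \<noteq> cluster (alg \<omega> xs) v} \<in> sets \<Omega>"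
begin

lemma measurable_partition_law: "alg \<in> measurable \<Omega> (partition_sigma (alg ` space \<Omega>))"
  unfolding partition_sigma_def
proof (rule measurable_measure_of[OF separation_events_subset_Pow])
  show "alg \<in> space \<Omega> \<rightarrow> alg ` space \<Omega>" by auto
  fix y assume "y \<in> {{A \<in> alg ` space \<Omega>. cluster (A xs) u \<noteq> cluster (A xs) v} | xs u v. True}"
  then obtain xs u v where "y = {A \<in> alg ` space \<Omega>. cluster (A xs) u \<noteq> cluster (A xs) v}" by blast
  then have "alg -` y \<inter> space \<Omega> = {\<omega> \<in> space \<Omega>. cluster (alg \<omega> xs) u \<noteq> cluster (alg \<omega> xs) v}" by auto
  then show "alg -` y \<inter> space \<Omega> \<in> sets \<Omega>" using separation_sets by simp
qed

lemma space_partition_law: "space (partition_law \<Omega> alg) = alg ` space \<Omega>"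
  unfolding partition_law_def partition_sigma_def space_distr
  by (rule space_measure_of[OF separation_events_subset_Pow])

lemma sep_event_partition_law_sets: "sep_event (partition_law \<Omega> alg) xs u v \<in> sets (partition_law \<Omega> alg)"
proof -
  have "sep_event (partition_law \<Omega> alg) xs u v \<in>
      {{A \<in> alg ` space \<Omega>. cluster (A xs) u \<noteq> cluster (A xs) v} | xs u v. True}"
    unfolding sep_event_def space_partition_law by blast
  then show ?thesis
    unfolding partition_law_def sets_distr partition_sigma_def
    by (rule in_measure_of[OF separation_events_subset_Pow])
qed

lemma measure_sep_event_partition_law:
  "measure (partition_law \<Omega> alg) (sep_event (partition_law \<Omega> alg) xs u v) =
    measure \<Omega> {\<omega> \<in> space \<Omega>. cluster (alg \<omega> xs) u \<noteq> cluster (alg \<omega> xs) v}"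
proof -
  have "measure (partition_law \<Omega> alg) (sep_event (partition_law \<Omega> alg) xs u v) =
      measure \<Omega> (alg -` sep_event (partition_law \<Omega> alg) xs u v \<inter> space \<Omega>)"
    using sep_event_partition_law_sets[of xs u v]
    unfolding partition_law_def by (intro measure_distr measurable_partition_law) simp_all
  also have "alg -` sep_event (partition_law \<Omega> alg) xs u v \<inter> space \<Omega> =
      {\<omega> \<in> space \<Omega>. cluster (alg \<omega> xs) u \<noteq> cluster (alg \<omega> xs) v}"
    by (auto simp: sep_event_def space_partition_law)
  finally show ?thesis .
qed

lemma prob_online_partition_law:
  assumes "prob_space \<Omega>" "\<And>\<omega>. \<omega> \<in> space \<Omega> \<Longrightarrow> online_mono_partition n s (alg \<omega>)"
  shows "prob_online_partition n s (partition_law \<Omega> alg)"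
proof -
  have "prob_space (partition_law \<Omega> alg)"
    unfolding partition_law_def by (rule prob_space.prob_space_distr[OF assms(1) measurable_partition_law])
  then show ?thesis
    unfolding prob_online_partition_def space_partition_law
    using assms(2) sep_event_partition_law_sets by blast
qed

end

lemma sep_event_commute: "sep_event M xs u v = sep_event M xs v u"
  by (auto simp: sep_event_def)

lemma smooth_atI:
  assumes "\<And>u v. u \<in> alive xs \<Longrightarrow> v \<in> alive xs \<Longrightarrow> u < v \<Longrightarrow> v - u \<le> s \<Longrightarrow>
      measure M (sep_event M xs u v) \<le> \<delta> * (v - u) / s"
    and "\<And>u v. u \<in> alive xs \<Longrightarrow> v \<in> alive xs \<Longrightarrow> u < v \<Longrightarrow> v - u \<le> \<epsilon> * s \<Longrightarrow>
      measure M (sep_event M xs u v) \<le> \<delta> * \<gamma> * (v - u) / s"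
  shows "smooth_at M s \<delta> \<epsilon> \<gamma> xs"
  unfolding smooth_at_def
proof (intro ballI)
  fix u v assume uv: "u \<in> alive xs" "v \<in> alive xs"
  consider "u < v" | "u = v" | "v < u" by linarith
  then show "(\<bar>u - v\<bar> \<le> s \<longrightarrow> measure M (sep_event M xs u v) \<le> \<delta> * \<bar>u - v\<bar> / s) \<and>
      (\<bar>u - v\<bar> \<le> \<epsilon> * s \<longrightarrow> measure M (sep_event M xs u v) \<le> \<delta> * \<gamma> * \<bar>u - v\<bar> / s)"
  proof cases
    case 1
    then show ?thesis using assms[OF uv] by simp
  next
    case 2
    then show ?thesis by (simp add: sep_event_def)
  next
    case 3
    then show ?thesis using assms[OF uv(2,1)] by (simp add: sep_event_commute[of M xs u v])
  qed
qed

lemma zero_smooth_atI: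
  assumes "\<And>u v. u \<in> alive xs \<Longrightarrow> v \<in> alive xs \<Longrightarrow> u < v \<Longrightarrow> v - u \<le> s \<Longrightarrow>
      measure M (sep_event M xs u v) = 0"
  shows "zero_smooth_at M s xs"
  unfolding zero_smooth_at_def
proof (intro ballI impI)
  fix u v assume uv: "u \<in> alive xs" "v \<in> alive xs" "\<bar>u - v\<bar> \<le> s"
  consider "u < v" | "u = v" | "v < u" by linarith
  then show "measure M (sep_event M xs u v) = 0"
  proof cases
    case 1
    then show ?thesis using assms uv by simp
  next
    case 2
    then show ?thesis by (simp add: sep_event_def)
  next
    case 3
    then show ?thesis using assms[of v u] uv by (simp add: sep_event_commute[of M xs u v])
  qed
qed

lemma zero_smooth_at_imp_smooth_at:
  assumes "zero_smooth_at M s xs" "s > 0" "\<epsilon> \<le> 1" "\<delta> \<ge> 0" "\<gamma> \<ge> 0"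
  shows "smooth_at M s \<delta> \<epsilon> \<gamma> xs"
  unfolding smooth_at_def
proof (intro ballI conjI impI)
  fix u v assume uv: "u \<in> alive xs" "v \<in> alive xs"
  have bounds: "0 \<le> \<delta> * \<bar>u - v\<bar> / s" "0 \<le> \<delta> * \<gamma> * \<bar>u - v\<bar> / s" using assms(2,4,5) by auto
  show "measure M (sep_event M xs u v) \<le> \<delta> * \<bar>u - v\<bar> / s" if "\<bar>u - v\<bar> \<le> s"
    using assms(1) uv that bounds by (simp add: zero_smooth_at_def)
  show "measure M (sep_event M xs u v) \<le> \<delta> * \<gamma> * \<bar>u - v\<bar> / s" if "\<bar>u - v\<bar> \<le> \<epsilon> * s"
  proof -
    have "\<epsilon> * s \<le> s" using assms(2,3) by simp
    then show ?thesis using assms(1) uv that bounds by (simp add: zero_smooth_at_def)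
  qed
qed

definition smooth_online_partition ::
  "nat \<Rightarrow> real \<Rightarrow> real \<Rightarrow> real \<Rightarrow> real \<Rightarrow> (update list \<Rightarrow> real set set) measure \<Rightarrow> bool" where
  "smooth_online_partition n s \<epsilon> \<delta> c M \<longleftrightarrow> prob_online_partition n s M \<and>
    (\<forall>xs. card (arrived xs) \<le> n \<longrightarrow>
      smooth_at M s \<delta> \<epsilon> (c * real n * \<epsilon>) xs \<and>
      ((\<forall>a\<in>arrived xs. \<forall>b\<in>arrived xs. \<not> (\<epsilon> * s \<le> \<bar>a - b\<bar> \<and> \<bar>a - b\<bar> \<le> s)) \<longrightarrow> zero_smooth_at M s xs))"

section \<open>Merging neighbouring cells\<close>

text \<open>Cells are indexed by integers through \<open>cl\<close>; a mark \<open>k \<in> M\<close> means that cells \<open>k - 1\<close>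
  and \<open>k\<close> are merged. An arriving point \<open>p\<close> merges its cell with a neighbouring cell that
  contains an earlier point within distance \<open>\<tau>\<close> of \<open>p\<close>, unless this would chain three cells.\<close>

definition merge_step :: "(real \<Rightarrow> int) \<Rightarrow> real \<Rightarrow> real set \<Rightarrow> real \<Rightarrow> int set \<Rightarrow> int set" where
  "merge_step cl \<tau> S p M =
    (let j = cl p;
         M' = (if (\<exists>q\<in>S. cl q = j - 1 \<and> \<bar>p - q\<bar> < \<tau>) \<and> j - 1 \<notin> M \<and> j + 1 \<notin> M
               then insert j M else M)
     in if (\<exists>q\<in>S. cl q = j + 1 \<and> \<bar>p - q\<bar> < \<tau>) \<and> j \<notin> M' \<and> j + 2 \<notin> M'
        then insert (j + 1) M' else M')"

fun merges_rev :: "(real \<Rightarrow> int) \<Rightarrow> real \<Rightarrow> update list \<Rightarrow> int set" where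
  "merges_rev cl \<tau> [] = {}"
| "merges_rev cl \<tau> (x # ys) =
    (if snd x then merge_step cl \<tau> (arrived (rev ys)) (fst x) (merges_rev cl \<tau> ys)
     else merges_rev cl \<tau> ys)"

definition merges :: "(real \<Rightarrow> int) \<Rightarrow> real \<Rightarrow> update list \<Rightarrow> int set" where
  "merges cl \<tau> xs = merges_rev cl \<tau> (rev xs)"

lemma merges_Nil [simp]: "merges cl \<tau> [] = {}"
  by (simp add: merges_def)

lemma merges_snoc:
  "merges cl \<tau> (xs @ [(p, b)]) = (if b then merge_step cl \<tau> (arrived xs) p (merges cl \<tau> xs) else merges cl \<tau> xs)"
  by (simp add: merges_def)

definition no_adjacent :: "int set \<Rightarrow> bool" where
  "no_adjacent M \<longleftrightarrow> (\<forall>k. \<not> (k \<in> M \<and> k + 1 \<in> M))"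

lemma subset_merge_step: "M \<subseteq> merge_step cl \<tau> S p M"
  by (auto simp: merge_step_def Let_def)

lemma no_adjacent_merge_step: "no_adjacent M \<Longrightarrow> no_adjacent (merge_step cl \<tau> S p M)"
  unfolding merge_step_def Let_def no_adjacent_def
  apply (simp only: split: if_split)
  apply (intro conjI impI allI)
  apply (auto simp: algebra_simps)
  apply (metis add.commute add_diff_cancel_left')+
  done

lemma merges_no_adjacent: "no_adjacent (merges cl \<tau> xs)"
proof (induction xs rule: rev_induct)
  case Nil
  then show ?case by (simp add: no_adjacent_def)
next
  case (snoc x xs)
  then show ?case by (cases x) (auto simp: merges_snoc intro: no_adjacent_merge_step)
qed

lemma merges_subset_snoc: "merges cl \<tau> xs \<subseteq> merges cl \<tau> (xs @ [x])"
  by (cases x) (auto simp: merges_snoc intro: subset_merge_step[THEN subsetD])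

lemma merge_step_new_mark:
  "k \<in> merge_step cl \<tau> S p M \<Longrightarrow> k \<notin> M \<Longrightarrow>
    (k = cl p \<and> (\<exists>q\<in>S. cl q = cl p - 1 \<and> \<bar>p - q\<bar> < \<tau>)) \<or>
    (k = cl p + 1 \<and> (\<exists>q\<in>S. cl q = cl p + 1 \<and> \<bar>p - q\<bar> < \<tau>))"
  by (auto simp: merge_step_def Let_def split: if_splits)

lemma merge_step_left:
  "q \<in> S \<Longrightarrow> cl q = cl p - 1 \<Longrightarrow> \<bar>p - q\<bar> < \<tau> \<Longrightarrow>
    cl p \<in> merge_step cl \<tau> S p M \<or> cl p - 1 \<in> M \<or> cl p + 1 \<in> M"
  by (auto simp: merge_step_def Let_def)

lemma merge_step_right:
  "q \<in> S \<Longrightarrow> cl q = cl p + 1 \<Longrightarrow> \<bar>p - q\<bar> < \<tau> \<Longrightarrow>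
    cl p + 1 \<in> merge_step cl \<tau> S p M \<or> cl p \<in> merge_step cl \<tau> S p M \<or> cl p + 2 \<in> merge_step cl \<tau> S p M"
  by (auto simp: merge_step_def Let_def)

lemma merges_witness:
  "k \<in> merges cl \<tau> xs \<Longrightarrow>
    \<exists>x\<in>arrived xs. \<exists>y\<in>arrived xs. cl x = k - 1 \<and> cl y = k \<and> \<bar>y - x\<bar> < \<tau>"
proof (induction xs rule: rev_induct)
  case (snoc x xs)
  obtain p b where x: "x = (p, b)" by (cases x)
  have old: "arrived xs \<subseteq> arrived (xs @ [x])" by (rule arrived_subset_append)
  show ?case
  proof (cases "k \<in> merges cl \<tau> xs")
    case True
    then show ?thesis using snoc.IH old by blast
  next
    case False
    with snoc.prems have b: b and new: "k \<in> merge_step cl \<tau> (arrived xs) p (merges cl \<tau> xs)"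
      by (auto simp: x merges_snoc split: if_splits)
    from new False have "(k = cl p \<and> (\<exists>q\<in>arrived xs. cl q = cl p - 1 \<and> \<bar>p - q\<bar> < \<tau>)) \<or>
        (k = cl p + 1 \<and> (\<exists>q\<in>arrived xs. cl q = cl p + 1 \<and> \<bar>p - q\<bar> < \<tau>))"
      by (rule merge_step_new_mark)
    moreover have "p \<in> arrived (xs @ [x])" by (simp add: x b arrived_snoc)
    ultimately show ?thesis using old by (force simp: abs_minus_commute)
  qed
qed simp

lemma merges_adjacent_close:
  "u \<in> arrived xs \<Longrightarrow> v \<in> arrived xs \<Longrightarrow> cl v = cl u + 1 \<Longrightarrow> \<bar>u - v\<bar> < \<tau> \<Longrightarrow>
    cl v - 1 \<in> merges cl \<tau> xs \<or> cl v \<in> merges cl \<tau> xs \<or> cl v + 1 \<in> merges cl \<tau> xs"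
proof (induction xs rule: rev_induct)
  case (snoc x xs)
  obtain p b where x: "x = (p, b)" by (cases x)
  define M where "M = merges cl \<tau> xs"
  show ?case
  proof (cases "u \<in> arrived xs \<and> v \<in> arrived xs")
    case True
    then show ?thesis using snoc merges_subset_snoc[of cl \<tau> xs x] by blast
  next
    case False
    with snoc.prems have b: b and new: "p = u \<and> v \<in> arrived xs \<or> p = v \<and> u \<in> arrived xs"
      by (auto simp: x arrived_snoc split: if_splits)
    have step: "merges cl \<tau> (xs @ [x]) = merge_step cl \<tau> (arrived xs) p M"
      by (simp add: x b merges_snoc M_def)
    from new show ?thesis
    proof
      assume "p = u \<and> v \<in> arrived xs"
      moreover from this have "cl v = cl p + 1" using snoc.prems(3) by simp
      ultimately show ?thesis
        using merge_step_right[of v "arrived xs" cl p \<tau> M] snoc.prems(4) by (simp add: step add.commute) blast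
    next
      assume "p = v \<and> u \<in> arrived xs"
      then show ?thesis
        using merge_step_left[of u "arrived xs" cl p \<tau> M] snoc.prems(3,4) subset_merge_step[of M cl \<tau> "arrived xs" p]
        by (auto simp: step abs_minus_commute)
    qed
  qed
qed simp

lemma merges_cong:
  assumes "\<And>x. x \<in> arrived xs \<Longrightarrow> cl x = cl' x"
  shows "merges cl \<tau> xs = merges cl' \<tau> xs"
  using assms
proof (induction xs rule: rev_induct)
  case (snoc x xs)
  obtain p b where x: "x = (p, b)" by (cases x)
  show ?case
  proof (cases b)
    case True
    have "\<And>y. y \<in> insert p (arrived xs) \<Longrightarrow> cl y = cl' y"
      using snoc.prems by (simp add: x True arrived_snoc)
    then have "merge_step cl \<tau> (arrived xs) p M = merge_step cl' \<tau> (arrived xs) p M" for M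
      by (simp add: merge_step_def)
    moreover have "merges cl \<tau> xs = merges cl' \<tau> xs"
      using snoc arrived_subset_append by blast
    ultimately show ?thesis by (simp add: x True merges_snoc)
  next
    case False
    then show ?thesis using snoc by (simp add: x merges_snoc arrived_snoc)
  qed
qed simp

definition merged_cell :: "(real \<Rightarrow> int) \<Rightarrow> int set \<Rightarrow> real \<Rightarrow> int" where
  "merged_cell cl M x = (if cl x \<in> M then cl x - 1 else cl x)"

lemma merged_cell_eq_cases:
  "merged_cell cl M u = merged_cell cl M w \<Longrightarrow>
    cl u = cl w \<or> (cl u = cl w + 1 \<and> cl u \<in> M) \<or> (cl w = cl u + 1 \<and> cl w \<in> M)"
  by (auto simp: merged_cell_def split: if_splits)

lemma merged_cell_eq_mono:
  assumes "no_adjacent M'" "M \<subseteq> M'" "merged_cell cl M u = merged_cell cl M w"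
  shows "merged_cell cl M' u = merged_cell cl M' w"
  using merged_cell_eq_cases[OF assms(3)] assms(1,2)
  by (auto simp: merged_cell_def no_adjacent_def)

definition merge_partition :: "(real \<Rightarrow> int) \<Rightarrow> real \<Rightarrow> update list \<Rightarrow> real set set" where
  "merge_partition cl \<tau> xs = level_partition (alive xs) (merged_cell cl (merges cl \<tau> xs))"

lemma merge_partition_cong:
  assumes "\<And>x. x \<in> arrived xs \<Longrightarrow> cl x = cl' x"
  shows "merge_partition cl \<tau> xs = merge_partition cl' \<tau> xs"
proof -
  have "merged_cell cl (merges cl \<tau> xs) y = merged_cell cl' (merges cl' \<tau> xs) y" if "y \<in> alive xs" for y
  proof -
    have "cl y = cl' y" using that alive_subset_arrived assms by blast
    then show ?thesis by (simp add: merged_cell_def merges_cong[OF assms])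
  qed
  then show ?thesis
    unfolding merge_partition_def level_partition_def by (intro image_cong) auto
qed

lemma cluster_merge_partition_eq_iff:
  "x \<in> alive xs \<Longrightarrow> y \<in> alive xs \<Longrightarrow>
    cluster (merge_partition cl \<tau> xs) x = cluster (merge_partition cl \<tau> xs) y \<longleftrightarrow>
    merged_cell cl (merges cl \<tau> xs) x = merged_cell cl (merges cl \<tau> xs) y"
  unfolding merge_partition_def by (rule cluster_level_partition_eq_iff)

lemma online_mono_partition_merge_partition:
  assumes "s \<ge> 0"
    and "\<And>M y z. no_adjacent M \<Longrightarrow> merged_cell cl M y = merged_cell cl M z \<Longrightarrow> \<bar>y - z\<bar> \<le> s"
  shows "online_mono_partition n s (merge_partition cl \<tau>)"
  unfolding merge_partition_def
  by (rule online_mono_partition_level_partitionI)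
    (use assms merges_no_adjacent merged_cell_eq_mono[OF merges_no_adjacent merges_subset_snoc] in blast)+

section \<open>The jittered grid\<close>

text \<open>Even and odd boundaries use different coordinates of \<open>\<omega>\<close>, so neighbouring boundaries are
  independent. With cell width \<open>5 s/11\<close> and jitter \<open>s/11\<close>, consecutive boundaries are at least
  \<open>4 s/11\<close> apart, a cell is narrower than \<open>6 s/11\<close> and two adjacent cells together are narrower
  than \<open>s\<close>. Clamping makes these bounds hold for every \<open>\<omega>\<close>, not only almost surely.\<close>

definition clamp :: "real \<Rightarrow> real" where
  "clamp x = max 0 (min 1 x)"

definition coord :: "int \<Rightarrow> real \<times> real \<Rightarrow> real" where
  "coord k \<omega> = (if even k then fst \<omega> else snd \<omega>)"

definition cut_point :: "real \<Rightarrow> int \<Rightarrow> real \<times> real \<Rightarrow> real" where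
  "cut_point s k \<omega> = real_of_int k * (5 * s / 11) + s / 11 * clamp (coord k \<omega>)"

definition cell :: "real \<Rightarrow> real \<times> real \<Rightarrow> real \<Rightarrow> int" where
  "cell s \<omega> x =
    (if cut_point s \<lfloor>x / (5 * s / 11)\<rfloor> \<omega> \<le> x then \<lfloor>x / (5 * s / 11)\<rfloor> else \<lfloor>x / (5 * s / 11)\<rfloor> - 1)"

lemma clamp_bounds: "0 \<le> clamp x" "clamp x \<le> 1"
  by (auto simp: clamp_def)

lemma cell_floor_bounds:
  "cell s \<omega> x \<le> \<lfloor>x / (5 * s / 11)\<rfloor>" "\<lfloor>x / (5 * s / 11)\<rfloor> - 1 \<le> cell s \<omega> x"
  by (auto simp: cell_def)

context
  fixes s :: real
  assumes s_pos: "s > 0"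
begin

lemma cut_point_bounds:
  "real_of_int k * (5 * s / 11) \<le> cut_point s k \<omega>"
  "cut_point s k \<omega> \<le> real_of_int k * (5 * s / 11) + s / 11"
  using clamp_bounds[of "coord k \<omega>"] s_pos by (auto simp: cut_point_def)

lemma cut_point_gap:
  assumes "k < m"
  shows "4 * s / 11 \<le> cut_point s m \<omega> - cut_point s k \<omega>"
proof -
  have "real_of_int k + 1 \<le> real_of_int m" using assms by linarith
  then have "(real_of_int k + 1) * (5 * s / 11) \<le> real_of_int m * (5 * s / 11)"
    using s_pos by (intro mult_right_mono) auto
  then show ?thesis
    using cut_point_bounds[of k \<omega>] cut_point_bounds[of m \<omega>] by (auto simp: algebra_simps)
qed

lemma cut_point_mono: "k \<le> m \<Longrightarrow> cut_point s k \<omega> \<le> cut_point s m \<omega>"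
  using cut_point_gap[of k m \<omega>] s_pos by (cases "k = m") auto

lemma cut_point_succ_diff_le: "cut_point s (k + 1) \<omega> - cut_point s k \<omega> \<le> 6 * s / 11"
proof -
  have "real_of_int (k + 1) * (5 * s / 11) = real_of_int k * (5 * s / 11) + 5 * s / 11"
    by (simp add: algebra_simps)
  then show ?thesis using cut_point_bounds[of k \<omega>] cut_point_bounds[of "k + 1" \<omega>] by linarith
qed

lemma cut_point_add_2_diff_le: "cut_point s (k + 2) \<omega> - cut_point s k \<omega> \<le> s"
proof -
  have "real_of_int (k + 2) * (5 * s / 11) = real_of_int k * (5 * s / 11) + 10 * s / 11"
    by (simp add: algebra_simps)
  then show ?thesis using cut_point_bounds[of k \<omega>] cut_point_bounds[of "k + 2" \<omega>] by linarith
qed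

lemma cut_point_cell_le: "cut_point s (cell s \<omega> x) \<omega> \<le> x"
proof (cases "cut_point s \<lfloor>x / (5 * s / 11)\<rfloor> \<omega> \<le> x")
  case False
  define f where "f = \<lfloor>x / (5 * s / 11)\<rfloor>"
  have "real_of_int f * (5 * s / 11) \<le> x"
    unfolding f_def using s_pos by (metis floor_divide_lower zero_less_divide_iff zero_less_numeral mult_pos_pos)
  moreover have "real_of_int (f - 1) * (5 * s / 11) + s / 11 = real_of_int f * (5 * s / 11) - 4 * s / 11"
    by (simp add: field_simps)
  then have "cut_point s (f - 1) \<omega> \<le> real_of_int f * (5 * s / 11)"
    using cut_point_bounds(2)[of "f - 1" \<omega>] s_pos by linarith
  ultimately show ?thesis using False by (simp add: cell_def f_def)
qed (simp add: cell_def)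

lemma less_cut_point_cell_succ: "x < cut_point s (cell s \<omega> x + 1) \<omega>"
proof (cases "cut_point s \<lfloor>x / (5 * s / 11)\<rfloor> \<omega> \<le> x")
  case True
  define f where "f = \<lfloor>x / (5 * s / 11)\<rfloor>"
  have "x < real_of_int (f + 1) * (5 * s / 11)"
    unfolding f_def using s_pos by (simp add: floor_divide_upper)
  also have "\<dots> \<le> cut_point s (f + 1) \<omega>" by (rule cut_point_bounds(1))
  finally show ?thesis using True by (simp add: cell_def f_def)
qed (simp add: cell_def)

lemma cell_mono: "x \<le> y \<Longrightarrow> cell s \<omega> x \<le> cell s \<omega> y"
  using cut_point_mono[of "cell s \<omega> y + 1" "cell s \<omega> x" \<omega>]
    cut_point_cell_le[of \<omega> x] less_cut_point_cell_succ[of y \<omega>]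
  by (cases "cell s \<omega> y < cell s \<omega> x") auto

lemma cell_between:
  assumes "cell s \<omega> x < k" "k \<le> cell s \<omega> y"
  shows "x < cut_point s k \<omega>" "cut_point s k \<omega> \<le> y"
  using cut_point_mono[of "cell s \<omega> x + 1" k \<omega>] cut_point_mono[of k "cell s \<omega> y" \<omega>]
    less_cut_point_cell_succ[of x \<omega>] cut_point_cell_le[of \<omega> y] assms
  by auto

lemma same_cell_dist:
  assumes "cell s \<omega> x = cell s \<omega> y"
  shows "\<bar>x - y\<bar> < 6 * s / 11"
  using cut_point_cell_le[of \<omega> x] less_cut_point_cell_succ[of x \<omega>]
    cut_point_cell_le[of \<omega> y] less_cut_point_cell_succ[of y \<omega>]
    cut_point_succ_diff_le[of "cell s \<omega> x" \<omega>]
  unfolding abs_less_iff assms by (intro conjI; linarith)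

lemma adjacent_cell_dist:
  assumes "cell s \<omega> y = cell s \<omega> x + 1"
  shows "\<bar>x - y\<bar> < s"
proof -
  define k where "k = cell s \<omega> x"
  have "cut_point s (k + 1) \<omega> \<le> y" "y < cut_point s (k + 2) \<omega>"
    using cut_point_cell_le[of \<omega> y] less_cut_point_cell_succ[of y \<omega>] assms
    by (simp_all add: k_def add.assoc)
  moreover have "cut_point s k \<omega> \<le> x" "x < cut_point s (k + 1) \<omega>"
    using cut_point_cell_le[of \<omega> x] less_cut_point_cell_succ[of x \<omega>] by (simp_all add: k_def)
  ultimately show ?thesis
    using cut_point_add_2_diff_le[of k \<omega>] cut_point_mono[of "k + 1" "k + 2" \<omega>]
    unfolding abs_less_iff by (intro conjI; linarith)
qed

lemma cell_close_imp_eq_or_succ: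
  assumes "x < y" "y - x < 4 * s / 11"
  shows "cell s \<omega> y = cell s \<omega> x \<or> cell s \<omega> y = cell s \<omega> x + 1"
proof (rule ccontr)
  assume "\<not> ?thesis"
  with cell_mono[of x y \<omega>] assms(1) have "cell s \<omega> x + 1 < cell s \<omega> y" by auto
  then have "4 * s / 11 \<le> cut_point s (cell s \<omega> y) \<omega> - cut_point s (cell s \<omega> x + 1) \<omega>"
    by (rule cut_point_gap)
  then show False
    using cut_point_cell_le[of \<omega> y] less_cut_point_cell_succ[of x \<omega>] assms(2) by linarith
qed

lemma merged_cell_dist:
  "merged_cell (cell s \<omega>) M y = merged_cell (cell s \<omega>) M z \<Longrightarrow> \<bar>y - z\<bar> < s"
  using merged_cell_eq_cases[of "cell s \<omega>" M y z] same_cell_dist[of \<omega> y z] s_pos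
    adjacent_cell_dist[of \<omega> y z] adjacent_cell_dist[of \<omega> z y]
  by (auto simp: abs_minus_commute)

end

definition grid_partition :: "real \<Rightarrow> real \<Rightarrow> real \<times> real \<Rightarrow> update list \<Rightarrow> real set set" where
  "grid_partition s \<epsilon> \<omega> = merge_partition (cell s \<omega>) (2 * \<epsilon> * s)"

lemma online_mono_partition_grid_partition:
  "s > 0 \<Longrightarrow> online_mono_partition n s (grid_partition s \<epsilon> \<omega>)"
  unfolding grid_partition_def
  by (rule online_mono_partition_merge_partition) (auto dest: merged_cell_dist less_imp_le)

lemma separated_imp_cell_less:
  assumes "s > 0" "u < v" "u \<in> alive xs" "v \<in> alive xs"
    and "cluster (grid_partition s \<epsilon> \<omega> xs) u \<noteq> cluster (grid_partition s \<epsilon> \<omega> xs) v"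
  shows "cell s \<omega> u < cell s \<omega> v"
proof -
  have "cell s \<omega> u \<noteq> cell s \<omega> v"
  proof
    assume "cell s \<omega> u = cell s \<omega> v"
    then have "merged_cell (cell s \<omega>) (merges (cell s \<omega>) (2 * \<epsilon> * s) xs) u =
        merged_cell (cell s \<omega>) (merges (cell s \<omega>) (2 * \<epsilon> * s) xs) v"
      by (simp add: merged_cell_def)
    with assms(3-5) show False by (simp add: grid_partition_def cluster_merge_partition_eq_iff)
  qed
  moreover have "cell s \<omega> u \<le> cell s \<omega> v"
    using assms(1,2) by (simp add: cell_mono)
  ultimately show ?thesis by simp
qed

lemma separated_imp_cut_between:
  assumes "s > 0" "u < v" "u \<in> alive xs" "v \<in> alive xs"
    and "cluster (grid_partition s \<epsilon> \<omega> xs) u \<noteq> cluster (grid_partition s \<epsilon> \<omega> xs) v"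
  shows "\<exists>j\<in>{\<lfloor>u / (5 * s / 11)\<rfloor>..\<lfloor>v / (5 * s / 11)\<rfloor>}. u < cut_point s j \<omega> \<and> cut_point s j \<omega> \<le> v"
proof
  have less: "cell s \<omega> u < cell s \<omega> v" by (rule separated_imp_cell_less[OF assms])
  show "u < cut_point s (cell s \<omega> v) \<omega> \<and> cut_point s (cell s \<omega> v) \<omega> \<le> v"
    using cell_between[OF assms(1) less order_refl] by simp
  show "cell s \<omega> v \<in> {\<lfloor>u / (5 * s / 11)\<rfloor>..\<lfloor>v / (5 * s / 11)\<rfloor>}"
    using cell_floor_bounds[where s=s and \<omega>=\<omega> and x=u] cell_floor_bounds[where s=s and \<omega>=\<omega> and x=v] less by simp
qed

lemma separated_close_imp_blocked:
  assumes s: "s > 0" and uv: "u < v" "u \<in> alive xs" "v \<in> alive xs"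
    and close: "v - u < 2 * \<epsilon> * s" "v - u < 4 * s / 11"
    and sep: "cluster (grid_partition s \<epsilon> \<omega> xs) u \<noteq> cluster (grid_partition s \<epsilon> \<omega> xs) v"
  shows "cell s \<omega> v = cell s \<omega> u + 1 \<and>
    (cell s \<omega> v - 1 \<in> merges (cell s \<omega>) (2 * \<epsilon> * s) xs \<or> cell s \<omega> v + 1 \<in> merges (cell s \<omega>) (2 * \<epsilon> * s) xs)"
proof -
  define cl where "cl = cell s \<omega>"
  define M where "M = merges cl (2 * \<epsilon> * s) xs"
  have succ: "cl v = cl u + 1"
    using cell_close_imp_eq_or_succ[OF s uv(1) close(2), of \<omega>] separated_imp_cell_less[OF s uv sep]
    by (auto simp: cl_def)
  have "cl v - 1 \<in> M \<or> cl v \<in> M \<or> cl v + 1 \<in> M"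
    using merges_adjacent_close[of u xs v cl] uv(2,3) alive_subset_arrived succ close(1) uv(1)
    by (auto simp: M_def)
  moreover have "cl v \<notin> M"
  proof
    assume "cl v \<in> M"
    moreover from this have "cl u \<notin> M"
      using merges_no_adjacent[of cl "2 * \<epsilon> * s" xs] succ by (auto simp: no_adjacent_def M_def)
    ultimately have "merged_cell cl M u = merged_cell cl M v"
      using succ by (simp add: merged_cell_def)
    then show False
      using sep uv(2,3) by (simp add: grid_partition_def cluster_merge_partition_eq_iff cl_def M_def)
  qed
  ultimately show ?thesis using succ by (auto simp: cl_def M_def)
qed

lemma merges_mark_near_arrival:
  assumes "s > 0" "k \<in> merges (cell s \<omega>) \<tau> xs"
  shows "\<exists>z\<in>arrived xs. \<bar>z - cut_point s k \<omega>\<bar> < \<tau>"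
proof -
  obtain x y where xy: "x \<in> arrived xs" "y \<in> arrived xs" "cell s \<omega> x = k - 1" "cell s \<omega> y = k"
      "\<bar>y - x\<bar> < \<tau>"
    using merges_witness[OF assms(2)] by blast
  have "x < cut_point s k \<omega>" "cut_point s k \<omega> \<le> y"
    using cell_between[OF assms(1), of \<omega> x k y] xy(3,4) by auto
  then show ?thesis using xy(1,5) by (intro bexI[of _ x]) auto
qed

lemma separated_close_imp_cut_near_arrival:
  assumes s: "s > 0" and uv: "u < v" "u \<in> alive xs" "v \<in> alive xs"
    and close: "v - u < 2 * \<epsilon> * s" "v - u < 4 * s / 11"
    and sep: "cluster (grid_partition s \<epsilon> \<omega> xs) u \<noteq> cluster (grid_partition s \<epsilon> \<omega> xs) v"
  shows "\<exists>j\<in>{\<lfloor>u / (5 * s / 11)\<rfloor>..\<lfloor>v / (5 * s / 11)\<rfloor>}. (u < cut_point s j \<omega> \<and> cut_point s j \<omega> \<le> v) \<and>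
    (\<exists>z\<in>arrived xs. \<bar>z - cut_point s (j - 1) \<omega>\<bar> < 2 * \<epsilon> * s \<or> \<bar>z - cut_point s (j + 1) \<omega>\<bar> < 2 * \<epsilon> * s)"
proof
  define j where "j = cell s \<omega> v"
  have blocked: "j = cell s \<omega> u + 1" "j - 1 \<in> merges (cell s \<omega>) (2 * \<epsilon> * s) xs \<or> j + 1 \<in> merges (cell s \<omega>) (2 * \<epsilon> * s) xs"
    using separated_close_imp_blocked[OF assms] unfolding j_def by blast+
  show "j \<in> {\<lfloor>u / (5 * s / 11)\<rfloor>..\<lfloor>v / (5 * s / 11)\<rfloor>}"
    using cell_floor_bounds[where s=s and \<omega>=\<omega> and x=u] cell_floor_bounds[where s=s and \<omega>=\<omega> and x=v] blocked(1) by (simp add: j_def)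
  show "(u < cut_point s j \<omega> \<and> cut_point s j \<omega> \<le> v) \<and>
    (\<exists>z\<in>arrived xs. \<bar>z - cut_point s (j - 1) \<omega>\<bar> < 2 * \<epsilon> * s \<or> \<bar>z - cut_point s (j + 1) \<omega>\<bar> < 2 * \<epsilon> * s)"
  proof
    show "u < cut_point s j \<omega> \<and> cut_point s j \<omega> \<le> v"
      using cell_between[OF s, of \<omega> u j v] blocked(1) by (simp add: j_def)
    show "\<exists>z\<in>arrived xs. \<bar>z - cut_point s (j - 1) \<omega>\<bar> < 2 * \<epsilon> * s \<or> \<bar>z - cut_point s (j + 1) \<omega>\<bar> < 2 * \<epsilon> * s"
      using blocked(2) merges_mark_near_arrival[OF s, where k="j - 1" and \<omega>=\<omega>]
        merges_mark_near_arrival[OF s, where k="j + 1" and \<omega>=\<omega>]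
      by blast
  qed
qed

lemma cut_points_apart:
  assumes "s > 0" "j < k" "a < cut_point s j \<omega>" "cut_point s k \<omega> \<le> b"
  shows "4 * s / 11 < b - a"
  using cut_point_gap[OF assms(1,2), of \<omega>] assms(3,4) by linarith

lemma gap_dist_less:
  fixes r s :: real
  assumes "\<forall>a\<in>Z. \<forall>b\<in>Z. \<not> (r \<le> \<bar>a - b\<bar> \<and> \<bar>a - b\<bar> \<le> s)" "a \<in> Z" "b \<in> Z" "\<bar>a - b\<bar> \<le> s"
  shows "\<bar>a - b\<bar> < r"
proof -
  have "\<not> (r \<le> \<bar>a - b\<bar> \<and> \<bar>a - b\<bar> \<le> s)" using assms(1-3) by blast
  then show ?thesis using assms(4) by linarith
qed

lemma gap_dist_trans:
  fixes r s :: real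
  assumes "\<forall>a\<in>Z. \<forall>b\<in>Z. \<not> (r \<le> \<bar>a - b\<bar> \<and> \<bar>a - b\<bar> \<le> s)" "2 * r \<le> s"
    and "a \<in> Z" "b \<in> Z" "c \<in> Z" "\<bar>a - b\<bar> < r" "\<bar>b - c\<bar> < r"
  shows "\<bar>a - c\<bar> < r"
  using gap_dist_less[OF assms(1,3,5)] assms(2,6,7) by linarith

text \<open>Without distances in \<open>[\<epsilon> s, s]\<close> the points within distance \<open>s\<close> of each other form groups of
  diameter below \<open>\<epsilon> s\<close>; a blocked merge would put two boundaries, which are \<open>4 s/11\<close> apart, inside
  such a group.\<close>

lemma grid_partition_same_cluster_if_gap:
  assumes s: "s > 0" and \<epsilon>: "\<epsilon> > 0" "\<epsilon> \<le> 1 / 3"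
    and gap: "\<forall>a\<in>arrived xs. \<forall>b\<in>arrived xs. \<not> (\<epsilon> * s \<le> \<bar>a - b\<bar> \<and> \<bar>a - b\<bar> \<le> s)"
    and uv: "u < v" "u \<in> alive xs" "v \<in> alive xs" "v - u \<le> s"
  shows "cluster (grid_partition s \<epsilon> \<omega> xs) u = cluster (grid_partition s \<epsilon> \<omega> xs) v"
proof (rule ccontr)
  assume sep: "\<not> ?thesis"
  define cl where "cl = cell s \<omega>"
  have es: "2 * (\<epsilon> * s) \<le> s" "\<epsilon> * s < 4 * s / 11" "0 < \<epsilon> * s"
    using \<epsilon> s by (auto simp: field_simps)
  have ar: "u \<in> arrived xs" "v \<in> arrived xs" using uv alive_subset_arrived by auto
  note near = gap_dist_less[OF gap] and chain = gap_dist_trans[OF gap es(1)]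
  have uv_near: "\<bar>u - v\<bar> < \<epsilon> * s" using near[OF ar] uv(1,4) by simp
  then have "v - u < 2 * \<epsilon> * s" "v - u < 4 * s / 11" using uv(1) es by auto
  from separated_close_imp_blocked[OF s uv(1-3) this sep]
  have succ: "cl v = cl u + 1" and "cl v - 1 \<in> merges cl (2 * \<epsilon> * s) xs \<or> cl v + 1 \<in> merges cl (2 * \<epsilon> * s) xs"
    unfolding cl_def by blast+
  then obtain k x y where k: "k = cl v - 1 \<or> k = cl v + 1" and xy: "x \<in> arrived xs" "y \<in> arrived xs"
      "cl x = k - 1" "cl y = k" "\<bar>y - x\<bar> < 2 * \<epsilon> * s"
    using merges_witness by blast
  have xy_near: "\<bar>x - y\<bar> < \<epsilon> * s" using near[OF xy(1,2)] xy(5) es(1) by simp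
  have cut_k: "x < cut_point s k \<omega>" "cut_point s k \<omega> \<le> y"
    using cell_between[OF s, of \<omega> x k y] xy(3,4) by (auto simp: cl_def)
  from k show False
  proof
    assume "k = cl v - 1"
    then have "\<bar>y - u\<bar> < \<epsilon> * s"
      using near[OF xy(2) ar(1)] same_cell_dist[OF s, of \<omega> y u] xy(4) succ s by (simp add: cl_def)
    then have "\<bar>x - v\<bar> < \<epsilon> * s" using chain[OF xy(1,2) ar(1) xy_near] chain[OF xy(1) ar] uv_near by blast
    moreover have "4 * s / 11 < v - x"
      using cut_points_apart[OF s, of k "cl v" x \<omega> v] cut_k \<open>k = cl v - 1\<close> cut_point_cell_le[OF s, of \<omega> v]
      by (simp add: cl_def)
    ultimately show False using es(2) by linarith
  next
    assume "k = cl v + 1"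
    then have "\<bar>x - v\<bar> < \<epsilon> * s"
      using near[OF xy(1) ar(2)] same_cell_dist[OF s, of \<omega> x v] xy(3) s by (simp add: cl_def)
    then have "\<bar>y - u\<bar> < \<epsilon> * s"
      using chain[OF xy(2,1) ar(2)] chain[OF xy(2) ar(2,1)] xy_near uv_near by (simp add: abs_minus_commute)
    moreover have "4 * s / 11 < y - u"
      using cut_points_apart[OF s, of "cl v" k u \<omega> y] cut_k \<open>k = cl v + 1\<close> less_cut_point_cell_succ[OF s, of u \<omega>] succ
      by (simp add: cl_def)
    ultimately show False using es(2) by linarith
  qed
qed


section \<open>Separation probabilities\<close>

definition uniform01 :: "real measure" where
  "uniform01 = uniform_measure lborel {0..1}"

definition jitter :: "(real \<times> real) measure" where
  "jitter = uniform01 \<Otimes>\<^sub>M uniform01"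

lemma prob_space_uniform01: "prob_space uniform01"
  unfolding uniform01_def by (rule prob_space_uniform_measure) auto

lemma sets_uniform01 [measurable_cong, simp]: "sets uniform01 = sets borel"
  by (simp add: uniform01_def)

lemma space_uniform01 [simp]: "space uniform01 = UNIV"
  by (simp add: uniform01_def)

interpretation uniform01: prob_space uniform01
  by (rule prob_space_uniform01)

lemma prob_space_jitter: "prob_space jitter"
  unfolding jitter_def by (rule prob_space_pair[OF prob_space_uniform01 prob_space_uniform01])

interpretation jitter: prob_space jitter
  by (rule prob_space_jitter)

lemma space_jitter [simp]: "space jitter = UNIV"
  by (simp add: jitter_def space_pair_measure)

lemma sets_jitter [measurable_cong]: "sets jitter = sets (borel \<Otimes>\<^sub>M borel)"
  unfolding jitter_def by (intro sets_pair_measure_cong) auto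

lemma clamp_measurable [measurable]: "clamp \<in> borel_measurable borel"
  unfolding clamp_def by measurable

lemma cut_point_measurable [measurable]: "(\<lambda>\<omega>. cut_point s k \<omega>) \<in> borel_measurable jitter"
  unfolding cut_point_def coord_def by (cases "even k") simp_all

lemma cell_eq_sets: "{\<omega> \<in> space jitter. cell s \<omega> x = k} \<in> sets jitter"
proof -
  define f where "f = \<lfloor>x / (5 * s / 11)\<rfloor>"
  have "{\<omega> \<in> space jitter. cell s \<omega> x = k} =
      (if k = f then {\<omega> \<in> space jitter. cut_point s f \<omega> \<le> x} else {}) \<union>
      (if k = f - 1 then {\<omega> \<in> space jitter. \<not> cut_point s f \<omega> \<le> x} else {})"
    unfolding cell_def f_def[symmetric] by auto
  also have "\<dots> \<in> sets jitter"
  proof -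
    have "{\<omega> \<in> space jitter. cut_point s f \<omega> \<le> x} \<in> sets jitter"
      "{\<omega> \<in> space jitter. \<not> cut_point s f \<omega> \<le> x} \<in> sets jitter"
      by measurable
    then show ?thesis by auto
  qed
  finally show ?thesis .
qed

lemma map_cell_measurable: "(\<lambda>\<omega>. map (cell s \<omega>) P) \<in> measurable jitter (count_space UNIV)"
proof -
  have "{\<omega> \<in> space jitter. map (cell s \<omega>) P = ys} \<in> sets jitter" for ys
  proof (induction P arbitrary: ys)
    case Nil
    show ?case using sets.top[of jitter] by (cases ys) auto
  next
    case (Cons p P)
    then show ?case
    proof (cases ys)
      case (Cons y ys')
      have "{\<omega> \<in> space jitter. map (cell s \<omega>) (p # P) = ys} =
          {\<omega> \<in> space jitter. cell s \<omega> p = y} \<inter> {\<omega> \<in> space jitter. map (cell s \<omega>) P = ys'}"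
        by (auto simp: Cons)
      then show ?thesis using cell_eq_sets Cons.IH by auto
    qed simp
  qed
  then show ?thesis
    by (auto simp: measurable_count_space_eq2_countable vimage_def Int_def conj_commute)
qed

definition cell_lookup :: "real list \<Rightarrow> int list \<Rightarrow> real \<Rightarrow> int" where
  "cell_lookup P ks x = (case map_of (zip P ks) x of Some k \<Rightarrow> k | None \<Rightarrow> 0)"

lemma cell_lookup_map: "x \<in> set P \<Longrightarrow> cell_lookup P (map f P) x = f x"
  by (simp add: cell_lookup_def map_of_zip_map)

text \<open>At time \<open>xs\<close> the grid partition depends on \<open>\<omega>\<close> only through the cells of the finitely
  many points of \<open>xs\<close>, a random variable with countably many values.\<close>

lemma grid_partition_separation_sets:
  "{\<omega> \<in> space jitter. cluster (grid_partition s \<epsilon> \<omega> xs) u \<noteq> cluster (grid_partition s \<epsilon> \<omega> xs) v} \<in> sets jitter"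
proof -
  define Q where "Q A \<longleftrightarrow> cluster A u \<noteq> cluster A v" for A
  define P where "P = map fst xs"
  have "arrived xs \<subseteq> set P" unfolding P_def by (simp add: arrived_subset_fst)
  then have "grid_partition s \<epsilon> \<omega> xs = merge_partition (cell_lookup P (map (cell s \<omega>) P)) (2 * \<epsilon> * s) xs" for \<omega>
    unfolding grid_partition_def by (intro merge_partition_cong) (auto simp: cell_lookup_map)
  then have "{\<omega> \<in> space jitter. cluster (grid_partition s \<epsilon> \<omega> xs) u \<noteq> cluster (grid_partition s \<epsilon> \<omega> xs) v} =
      (\<lambda>\<omega>. map (cell s \<omega>) P) -` {ks. Q (merge_partition (cell_lookup P ks) (2 * \<epsilon> * s) xs)} \<inter> space jitter"
    by (auto simp: Q_def)
  also have "\<dots> \<in> sets jitter"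
    by (rule measurable_sets[OF map_cell_measurable]) simp
  finally show ?thesis .
qed


lemma measure_uniform01_clamp_le:
  assumes h: "h > 0" and ab: "a \<le> b" and P: "{x. P x} \<in> sets borel"
    and bnd: "\<And>x. P x \<Longrightarrow> a \<le> K + h * clamp x \<and> K + h * clamp x \<le> b"
  shows "measure uniform01 {x. P x} \<le> (b - a) / h"
proof -
  have "measure uniform01 {x. P x} = measure lborel ({0..1} \<inter> {x. P x})"
    unfolding uniform01_def using P by (simp add: measure_uniform_measure)
  also have "\<dots> \<le> measure lborel {(a - K) / h .. (b - K) / h}"
  proof (rule measure_mono_fmeasurable)
    show "{0..1} \<inter> {x. P x} \<subseteq> {(a - K) / h .. (b - K) / h}"
    proof
      fix x assume x: "x \<in> {0..1} \<inter> {x. P x}"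
      then have "clamp x = x" by (auto simp: clamp_def)
      with bnd[of x] x have "a \<le> K + h * x" "K + h * x \<le> b" by auto
      then show "x \<in> {(a - K) / h .. (b - K) / h}" using h by (auto simp: field_simps)
    qed
    show "{0..1} \<inter> {x. P x} \<in> sets lborel" using P by auto
  qed (simp add: fmeasurable_compact)
  also have "\<dots> = (b - a) / h" using h ab by (simp add: field_simps divide_right_mono)
  finally show ?thesis .
qed

lemma measure_uniform01_between_le:
  assumes "s > 0" "u < v"
  shows "measure uniform01 {x. u < K + s / 11 * clamp x \<and> K + s / 11 * clamp x \<le> v} \<le> 11 * (v - u) / s"
proof -
  have "measure uniform01 {x. u < K + s / 11 * clamp x \<and> K + s / 11 * clamp x \<le> v} \<le> (v - u) / (s / 11)"
    by (rule measure_uniform01_clamp_le[where K = K]) (use assms in auto)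
  also have "\<dots> = 11 * (v - u) / s" by simp
  finally show ?thesis .
qed

lemma measure_uniform01_near_le:
  assumes "finite Z" "h > 0" "r \<ge> 0"
  shows "measure uniform01 {y. \<exists>z\<in>Z. \<bar>z - (K + h * clamp y)\<bar> < r} \<le> real (card Z) * (2 * r / h)"
proof -
  have near_sets: "{y. \<bar>z - (K + h * clamp y)\<bar> < r} \<in> sets borel" for z
    by measurable
  have "measure uniform01 {y. \<exists>z\<in>Z. \<bar>z - (K + h * clamp y)\<bar> < r} =
      measure uniform01 (\<Union>z\<in>Z. {y. \<bar>z - (K + h * clamp y)\<bar> < r})"
    by (simp add: Collect_bex_eq)
  also have "\<dots> \<le> (\<Sum>z\<in>Z. measure uniform01 {y. \<bar>z - (K + h * clamp y)\<bar> < r})"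
    by (rule measure_UNION_le) (use assms(1) near_sets in auto)
  also have "\<dots> \<le> (\<Sum>z\<in>Z. ((z + r) - (z - r)) / h)"
    by (intro sum_mono measure_uniform01_clamp_le[where K = K] near_sets)
      (use assms(2,3) in \<open>auto simp: abs_less_iff\<close>)
  finally show ?thesis by simp
qed

lemma measure_jitter_coords:
  assumes "{x. P x} \<in> sets borel" "{x. Q x} \<in> sets borel"
  shows "measure jitter {\<omega>. P (coord j \<omega>) \<and> Q (coord (j + 1) \<omega>)} =
    measure uniform01 {x. P x} * measure uniform01 {x. Q x}"
proof -
  have rect: "measure jitter (A \<times> B) = measure uniform01 A * measure uniform01 B"
    if "A \<in> sets borel" "B \<in> sets borel" for A B
  proof -
    have "emeasure jitter (A \<times> B) = emeasure uniform01 A * emeasure uniform01 B"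
      unfolding jitter_def by (rule uniform01.emeasure_pair_measure_Times) (use that in auto)
    then show ?thesis by (simp add: measure_def enn2real_mult)
  qed
  show ?thesis
  proof (cases "even j")
    case True
    then have "{\<omega>. P (coord j \<omega>) \<and> Q (coord (j + 1) \<omega>)} = {x. P x} \<times> {x. Q x}"
      by (auto simp: coord_def)
    then show ?thesis using rect[OF assms] by simp
  next
    case False
    then have "{\<omega>. P (coord j \<omega>) \<and> Q (coord (j + 1) \<omega>)} = {x. Q x} \<times> {x. P x}"
      by (auto simp: coord_def)
    then show ?thesis using rect[OF assms(2,1)] by simp
  qed
qed

lemma prob_cut_between_le:
  assumes "s > 0" "u < v"
  shows "measure jitter {\<omega>. u < cut_point s j \<omega> \<and> cut_point s j \<omega> \<le> v} \<le> 11 * (v - u) / s"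
proof -
  define K where "K = real_of_int j * (5 * s / 11)"
  define P where "P x \<longleftrightarrow> u < K + s / 11 * clamp x \<and> K + s / 11 * clamp x \<le> v" for x
  have P_sets: "{x. P x} \<in> sets borel" unfolding P_def by measurable
  have "{\<omega>. u < cut_point s j \<omega> \<and> cut_point s j \<omega> \<le> v} = {\<omega>. P (coord j \<omega>) \<and> True}"
    by (simp add: cut_point_def P_def K_def)
  then have "measure jitter {\<omega>. u < cut_point s j \<omega> \<and> cut_point s j \<omega> \<le> v} = measure uniform01 {x. P x}"
    using measure_jitter_coords[OF P_sets, of "\<lambda>_. True" j] uniform01.prob_space by simp
  also have "\<dots> \<le> 11 * (v - u) / s"
    unfolding P_def by (rule measure_uniform01_between_le[OF assms])
  finally show ?thesis .
qed

text \<open>Boundaries \<open>j - 1\<close> and \<open>j + 1\<close> use the same coordinate of \<open>\<omega>\<close>, independent of the one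
  used by boundary \<open>j\<close>.\<close>

lemma prob_cut_between_near_neighbour_le:
  assumes s: "s > 0" and uv: "u < v" and \<epsilon>: "\<epsilon> > 0" and Z: "finite Z"
  shows "measure jitter {\<omega>. (u < cut_point s j \<omega> \<and> cut_point s j \<omega> \<le> v) \<and>
      (\<exists>z\<in>Z. \<bar>z - cut_point s (j - 1) \<omega>\<bar> < 2 * \<epsilon> * s \<or> \<bar>z - cut_point s (j + 1) \<omega>\<bar> < 2 * \<epsilon> * s)}
    \<le> 11 * (v - u) / s * (real (card Z) * (88 * \<epsilon>))"
proof -
  define K where "K i = real_of_int i * (5 * s / 11)" for i
  define P where "P x \<longleftrightarrow> u < K j + s / 11 * clamp x \<and> K j + s / 11 * clamp x \<le> v" for x
  define N where "N i = {y. \<exists>z\<in>Z. \<bar>z - (K i + s / 11 * clamp y)\<bar> < 2 * \<epsilon> * s}" for i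
  have P_sets: "{x. P x} \<in> sets borel" unfolding P_def by measurable
  have N_sets: "N i \<in> sets borel" for i
  proof -
    have "{y. \<bar>z - (K i + s / 11 * clamp y)\<bar> < 2 * \<epsilon> * s} \<in> sets borel" for z
      by measurable
    then show ?thesis unfolding N_def Collect_bex_eq using Z by (intro sets.finite_UN) auto
  qed
  have N_le: "measure uniform01 (N i) \<le> real (card Z) * (44 * \<epsilon>)" for i
  proof -
    have "measure uniform01 (N i) \<le> real (card Z) * (2 * (2 * \<epsilon> * s) / (s / 11))"
      unfolding N_def by (rule measure_uniform01_near_le) (use Z s \<epsilon> in auto)
    also have "\<dots> = real (card Z) * (44 * \<epsilon>)" using s by simp
    finally show ?thesis .
  qed
  have "coord (j - 1) \<omega> = coord (j + 1) \<omega>" for \<omega>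
    by (simp add: coord_def)
  then have "{\<omega>. (u < cut_point s j \<omega> \<and> cut_point s j \<omega> \<le> v) \<and>
      (\<exists>z\<in>Z. \<bar>z - cut_point s (j - 1) \<omega>\<bar> < 2 * \<epsilon> * s \<or> \<bar>z - cut_point s (j + 1) \<omega>\<bar> < 2 * \<epsilon> * s)} =
    {\<omega>. P (coord j \<omega>) \<and> coord (j + 1) \<omega> \<in> N (j - 1) \<union> N (j + 1)}"
    by (auto simp: cut_point_def P_def N_def K_def)
  also have "measure jitter \<dots> = measure uniform01 {x. P x} * measure uniform01 (N (j - 1) \<union> N (j + 1))"
    using measure_jitter_coords[OF P_sets, of "\<lambda>y. y \<in> N (j - 1) \<union> N (j + 1)" j] N_sets by (simp add: Un_def)
  also have "\<dots> \<le> 11 * (v - u) / s * (real (card Z) * (88 * \<epsilon>))"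
  proof (rule mult_mono)
    show "measure uniform01 {x. P x} \<le> 11 * (v - u) / s"
      unfolding P_def by (rule measure_uniform01_between_le[OF s uv])
    have "measure uniform01 (N (j - 1) \<union> N (j + 1)) \<le> measure uniform01 (N (j - 1)) + measure uniform01 (N (j + 1))"
      by (rule measure_Un_le) (use N_sets in auto)
    then show "measure uniform01 (N (j - 1) \<union> N (j + 1)) \<le> real (card Z) * (88 * \<epsilon>)"
      using N_le[of "j - 1"] N_le[of "j + 1"] by linarith
  qed (use s uv in auto)
  finally show ?thesis .
qed

lemma (in finite_measure) measure_le_card_mult_bound:
  assumes "S \<subseteq> (\<Union>j\<in>J. E j)" "finite J" "\<And>j. j \<in> J \<Longrightarrow> E j \<in> sets M"
    and "\<And>j. j \<in> J \<Longrightarrow> measure M (E j) \<le> b"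
  shows "measure M S \<le> real (card J) * b"
proof -
  have "measure M S \<le> measure M (\<Union>j\<in>J. E j)"
    using assms(1-3) by (intro finite_measure_mono) auto
  also have "\<dots> \<le> (\<Sum>j\<in>J. measure M (E j))"
    using assms(2,3) by (intro measure_UNION_le) auto
  also have "\<dots> \<le> (\<Sum>j\<in>J. b)"
    using assms(4) by (rule sum_mono)
  finally show ?thesis by simp
qed

lemma card_floor_range_le:
  assumes "L > 0" "v - u < real m * L"
  shows "card {\<lfloor>u / L\<rfloor>..\<lfloor>v / L\<rfloor>} \<le> m + 1"
proof -
  have "v / L - u / L < real m"
    using assms by (simp add: diff_divide_distrib[symmetric] pos_divide_less_eq)
  then have "\<lfloor>v / L\<rfloor> - \<lfloor>u / L\<rfloor> < int m + 1"
    using of_int_floor_le[of "v / L"] real_of_int_floor_add_one_gt[of "u / L"] by linarith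
  then show ?thesis by simp
qed


lemma prob_separated_le:
  assumes s: "s > 0" and uv: "u < v" "u \<in> alive xs" "v \<in> alive xs" "v - u \<le> s"
  shows "measure jitter {\<omega>. cluster (grid_partition s \<epsilon> \<omega> xs) u \<noteq> cluster (grid_partition s \<epsilon> \<omega> xs) v}
    \<le> 44 * (v - u) / s"
proof -
  define J where "J = {\<lfloor>u / (5 * s / 11)\<rfloor>..\<lfloor>v / (5 * s / 11)\<rfloor>}"
  define E where "E j = {\<omega>. u < cut_point s j \<omega> \<and> cut_point s j \<omega> \<le> v}" for j
  have E_sets: "E j \<in> sets jitter" for j
  proof -
    have "{\<omega> \<in> space jitter. u < cut_point s j \<omega> \<and> cut_point s j \<omega> \<le> v} \<in> sets jitter"
      by measurable
    then show ?thesis by (simp add: E_def)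
  qed
  have "measure jitter {\<omega>. cluster (grid_partition s \<epsilon> \<omega> xs) u \<noteq> cluster (grid_partition s \<epsilon> \<omega> xs) v}
      \<le> real (card J) * (11 * (v - u) / s)"
  proof (rule jitter.measure_le_card_mult_bound)
    show "{\<omega>. cluster (grid_partition s \<epsilon> \<omega> xs) u \<noteq> cluster (grid_partition s \<epsilon> \<omega> xs) v} \<subseteq> (\<Union>j\<in>J. E j)"
      using separated_imp_cut_between[OF s uv(1-3)] unfolding J_def E_def by blast
    show "measure jitter (E j) \<le> 11 * (v - u) / s" if "j \<in> J" for j
      unfolding E_def by (rule prob_cut_between_le[OF s uv(1)])
  qed (simp_all add: J_def E_sets)
  also have "\<dots> \<le> real (3 + 1) * (11 * (v - u) / s)"
  proof (rule mult_right_mono)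
    have "card J \<le> 3 + 1"
      unfolding J_def by (rule card_floor_range_le) (use s uv(1,4) in auto)
    then show "real (card J) \<le> real (3 + 1)" by linarith
  qed (use s uv in auto)
  finally show ?thesis by simp
qed

lemma prob_separated_close_le:
  assumes s: "s > 0" and \<epsilon>: "\<epsilon> > 0" "\<epsilon> \<le> 1 / 3"
    and uv: "u < v" "u \<in> alive xs" "v \<in> alive xs" "v - u \<le> \<epsilon> * s"
  shows "measure jitter {\<omega>. cluster (grid_partition s \<epsilon> \<omega> xs) u \<noteq> cluster (grid_partition s \<epsilon> \<omega> xs) v}
    \<le> 44 * (44 * real (card (arrived xs)) * \<epsilon>) * (v - u) / s"
proof -
  define J where "J = {\<lfloor>u / (5 * s / 11)\<rfloor>..\<lfloor>v / (5 * s / 11)\<rfloor>}"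
  define E where "E j = {\<omega>. (u < cut_point s j \<omega> \<and> cut_point s j \<omega> \<le> v) \<and>
      (\<exists>z\<in>arrived xs. \<bar>z - cut_point s (j - 1) \<omega>\<bar> < 2 * \<epsilon> * s \<or> \<bar>z - cut_point s (j + 1) \<omega>\<bar> < 2 * \<epsilon> * s)}"
    for j
  have E_sets: "E j \<in> sets jitter" for j
  proof -
    have "{\<omega> \<in> space jitter. (u < cut_point s j \<omega> \<and> cut_point s j \<omega> \<le> v) \<and>
      (\<exists>z\<in>arrived xs. \<bar>z - cut_point s (j - 1) \<omega>\<bar> < 2 * \<epsilon> * s \<or> \<bar>z - cut_point s (j + 1) \<omega>\<bar> < 2 * \<epsilon> * s)}
      \<in> sets jitter"
      using finite_arrived[of xs] by measurable
    then show ?thesis by (simp add: E_def)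
  qed
  have es: "\<epsilon> * s \<le> s / 3" "0 < \<epsilon> * s" using \<epsilon> s by (auto simp: field_simps)
  have close: "v - u < 2 * \<epsilon> * s" "v - u < 4 * s / 11" using uv(4) es by auto
  have "measure jitter {\<omega>. cluster (grid_partition s \<epsilon> \<omega> xs) u \<noteq> cluster (grid_partition s \<epsilon> \<omega> xs) v}
      \<le> real (card J) * (11 * (v - u) / s * (real (card (arrived xs)) * (88 * \<epsilon>)))"
  proof (rule jitter.measure_le_card_mult_bound)
    show "{\<omega>. cluster (grid_partition s \<epsilon> \<omega> xs) u \<noteq> cluster (grid_partition s \<epsilon> \<omega> xs) v} \<subseteq> (\<Union>j\<in>J. E j)"
      using separated_close_imp_cut_near_arrival[OF s uv(1-3) close] unfolding J_def E_def by blast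
    show "measure jitter (E j) \<le> 11 * (v - u) / s * (real (card (arrived xs)) * (88 * \<epsilon>))" if "j \<in> J" for j
      unfolding E_def by (rule prob_cut_between_near_neighbour_le[OF s uv(1) \<epsilon>(1) finite_arrived])
  qed (simp_all add: J_def E_sets)
  also have "\<dots> \<le> real (1 + 1) * (11 * (v - u) / s * (real (card (arrived xs)) * (88 * \<epsilon>)))"
  proof (rule mult_right_mono)
    have "card J \<le> 1 + 1"
      unfolding J_def by (rule card_floor_range_le) (use s uv(1,4) es in auto)
    then show "real (card J) \<le> real (1 + 1)" by linarith
  qed (use s uv \<epsilon> in auto)
  also have "\<dots> = 44 * (44 * real (card (arrived xs)) * \<epsilon>) * (v - u) / s"
    by simp
  finally show ?thesis .
qed


lemma smooth_online_partition_grid: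
  assumes s: "s > 0" and \<epsilon>: "0 < \<epsilon>" "\<epsilon> \<le> 1 / 3"
  shows "smooth_online_partition n s \<epsilon> 44 44 (partition_law jitter (grid_partition s \<epsilon>))"
proof -
  define M where "M = partition_law jitter (grid_partition s \<epsilon>)"
  note sep_sets = grid_partition_separation_sets[of s \<epsilon>]
  have law: "measure M (sep_event M xs u v) =
      measure jitter {\<omega>. cluster (grid_partition s \<epsilon> \<omega> xs) u \<noteq> cluster (grid_partition s \<epsilon> \<omega> xs) v}" for xs u v
    using measure_sep_event_partition_law[OF sep_sets] by (simp add: M_def)
  show ?thesis
    unfolding smooth_online_partition_def M_def[symmetric]
  proof (intro conjI allI impI)
    show "prob_online_partition n s M"
      unfolding M_def
      by (rule prob_online_partition_law[OF sep_sets prob_space_jitter online_mono_partition_grid_partition[OF s]])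
  next
    fix xs assume n: "card (arrived xs) \<le> n"
    show "smooth_at M s 44 \<epsilon> (44 * real n * \<epsilon>) xs"
    proof (rule smooth_atI)
      fix u v assume uv: "u \<in> alive xs" "v \<in> alive xs" "u < v"
      show "measure M (sep_event M xs u v) \<le> 44 * (v - u) / s" if "v - u \<le> s"
        unfolding law by (rule prob_separated_le[OF s uv(3,1,2) that])
      show "measure M (sep_event M xs u v) \<le> 44 * (44 * real n * \<epsilon>) * (v - u) / s" if "v - u \<le> \<epsilon> * s"
      proof -
        have "measure M (sep_event M xs u v) \<le> 44 * (44 * real (card (arrived xs)) * \<epsilon>) * (v - u) / s"
          unfolding law by (rule prob_separated_close_le[OF s \<epsilon> uv(3,1,2) that])
        also have "\<dots> \<le> 44 * (44 * real n * \<epsilon>) * (v - u) / s"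
          using n s \<epsilon>(1) uv(3) by (intro divide_right_mono mult_right_mono mult_left_mono) auto
        finally show ?thesis .
      qed
    qed
  next
    fix xs assume "card (arrived xs) \<le> n"
      and gap: "\<forall>a\<in>arrived xs. \<forall>b\<in>arrived xs. \<not> (\<epsilon> * s \<le> \<bar>a - b\<bar> \<and> \<bar>a - b\<bar> \<le> s)"
    show "zero_smooth_at M s xs"
      by (rule zero_smooth_atI) (simp add: law grid_partition_same_cluster_if_gap[OF s \<epsilon> gap])
  qed
qed

section \<open>At most two points\<close>

definition whole_or_singletons :: "real \<Rightarrow> update list \<Rightarrow> real set set" where
  "whole_or_singletons s xs = level_partition (alive xs) (\<lambda>y. if diameter (alive xs) \<le> s then 0 else y)"

lemma diameter_alive_le_if_two_points:
  assumes "card (arrived xs) \<le> 2" "u \<in> alive xs" "v \<in> alive xs" "u \<noteq> v" "\<bar>u - v\<bar> \<le> s"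
  shows "diameter (alive xs) \<le> s"
proof -
  have "{u, v} \<subseteq> arrived xs" using assms(2,3) alive_subset_arrived by auto
  moreover have "card (arrived xs) \<le> card {u, v}" using assms(1,4) by simp
  ultimately have "arrived xs = {u, v}" using card_seteq[OF finite_arrived] by blast
  then have "alive xs = {u, v}" using assms(2,3) alive_subset_arrived by blast
  then show ?thesis
    using assms(5) by (auto intro!: diameter_le simp: dist_real_def abs_minus_commute)
qed

lemma online_mono_partition_whole_or_singletons:
  assumes "s > 0" "n \<le> 2"
  shows "online_mono_partition n s (whole_or_singletons s)"
  unfolding whole_or_singletons_def
proof (rule online_mono_partition_level_partitionI)
  fix xs y z
  assume yz: "y \<in> alive xs" "z \<in> alive xs"
    and eq: "(if diameter (alive xs) \<le> s then 0 else y) = (if diameter (alive xs) \<le> s then 0 else z)"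
  have "\<bar>y - z\<bar> \<le> diameter (alive xs)"
    using diameter_bounded_bound[OF finite_imp_bounded[OF finite_alive] yz] by (simp add: dist_real_def)
  with eq assms(1) show "\<bar>y - z\<bar> \<le> s" by (auto split: if_splits)
next
  fix xs x u w
  assume n: "card (arrived (xs @ [x])) \<le> n" and uw: "u \<in> alive xs \<inter> alive (xs @ [x])" "w \<in> alive xs \<inter> alive (xs @ [x])"
    and eq: "(if diameter (alive xs) \<le> s then 0 else u) = (if diameter (alive xs) \<le> s then 0 else w)"
  show "(if diameter (alive (xs @ [x])) \<le> s then 0 else u) = (if diameter (alive (xs @ [x])) \<le> s then 0 else w)"
  proof (cases "u = w")
    case False
    with eq have "diameter (alive xs) \<le> s" by (auto split: if_splits)
    moreover have "\<bar>u - w\<bar> \<le> diameter (alive xs)"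
      using diameter_bounded_bound[OF finite_imp_bounded[OF finite_alive], of u xs w] uw
      by (simp add: dist_real_def)
    ultimately have "diameter (alive (xs @ [x])) \<le> s"
      using diameter_alive_le_if_two_points[of "xs @ [x]" u w s] n assms(2) uw False by simp
    then show ?thesis by simp
  qed simp
qed (use assms in simp)

lemma smooth_online_partition_few_points:
  assumes s: "s > 0" and n: "n \<le> 2" and \<epsilon>: "0 \<le> \<epsilon>" "\<epsilon> \<le> 1" and "\<delta> \<ge> 0" "c \<ge> 0"
  shows "smooth_online_partition n s \<epsilon> \<delta> c (partition_law (return (count_space UNIV) ()) (\<lambda>_. whole_or_singletons s))"
proof -
  define \<Omega> where "\<Omega> = return (count_space UNIV) ()"
  define M where "M = partition_law \<Omega> (\<lambda>_. whole_or_singletons s)"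
  have sep_sets: "{\<omega> \<in> space \<Omega>. P \<omega>} \<in> sets \<Omega>" for P
    by (simp add: \<Omega>_def)
  have zero: "zero_smooth_at M s xs" if "card (arrived xs) \<le> n" for xs
  proof (rule zero_smooth_atI)
    fix u v assume uv: "u \<in> alive xs" "v \<in> alive xs" "u < v" "v - u \<le> s"
    have "diameter (alive xs) \<le> s"
      using diameter_alive_le_if_two_points[of xs u v s] that n uv by simp
    then have "cluster (whole_or_singletons s xs) u = cluster (whole_or_singletons s xs) v"
      using uv by (simp add: whole_or_singletons_def cluster_level_partition_eq_iff)
    then show "measure M (sep_event M xs u v) = 0"
      unfolding M_def measure_sep_event_partition_law[OF sep_sets] by simp
  qed
  show ?thesis
    unfolding smooth_online_partition_def \<Omega>_def[symmetric] M_def[symmetric]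
  proof (intro conjI allI impI)
    show "prob_online_partition n s M"
      unfolding M_def
      by (rule prob_online_partition_law[OF sep_sets])
        (auto simp: \<Omega>_def intro: prob_space_return online_mono_partition_whole_or_singletons[OF s n])
  qed (use zero zero_smooth_at_imp_smooth_at s \<epsilon> assms(5,6) in auto)
qed

theorem mainTheorem16:
  shows "\<exists>\<delta>::real. \<exists>c::real. \<delta> > 0 \<and> c > 0 \<and>
    (\<forall>(n::nat) (s::real) (\<epsilon>::real). n \<ge> 1 \<longrightarrow> s > 0 \<longrightarrow> 0 < \<epsilon> \<longrightarrow> \<epsilon> \<le> 1 / real n \<longrightarrow>
      (\<exists>M. prob_online_partition n s M \<and>
        (\<forall>xs. card (arrived xs) \<le> n \<longrightarrow>
           smooth_at M s \<delta> \<epsilon> (c * real n * \<epsilon>) xs \<and>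
           ((\<forall>a\<in>arrived xs. \<forall>b\<in>arrived xs. \<not> (\<epsilon> * s \<le> \<bar>a - b\<bar> \<and> \<bar>a - b\<bar> \<le> s))
              \<longrightarrow> zero_smooth_at M s xs))))"
  unfolding smooth_online_partition_def[symmetric]
proof (intro exI[of _ 44] conjI allI impI)
  fix n :: nat and s \<epsilon> :: real
  assume n: "n \<ge> 1" and s: "s > 0" and \<epsilon>: "0 < \<epsilon>" "\<epsilon> \<le> 1 / real n"
  show "\<exists>M. smooth_online_partition n s \<epsilon> 44 44 M"
  proof (cases "n \<le> 2")
    case True
    have "\<epsilon> \<le> 1" using \<epsilon>(2) n by (simp add: divide_le_eq_1 order_trans)
    then show ?thesis using smooth_online_partition_few_points[OF s True, of \<epsilon> 44 44] \<epsilon>(1) by auto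
  next
    case False
    then have "1 / real n \<le> 1 / 3" by (simp add: field_simps)
    then have "\<epsilon> \<le> 1 / 3" using \<epsilon>(2) by linarith
    then show ?thesis using smooth_online_partition_grid[OF s \<epsilon>(1)] by blast
  qed
qed simp_all

end
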